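(* In the Uniform Price Auction, for every value profile and every agent $i$, the payment satisfies $\pi_i\le B_i$.
   Context: Uniform Price Auction: one unit of a divisible good, $n$ agents with values per unit $v_i>0$ and publicly known budgets $B_i>0$. Relabel agents so that $v_1\ge\dots\ge v_n$ and set $v_{n+1}=0$. Let $k\in\{0,\dots,n\}$ be the largest integer with $\sum_{j=1}^kB_j\le v_k$ (the empty sum is $0$, and $k=0$ is always admissible). Case I: if $\sum_{j=1}^kB_j>v_{k+1}$, allocate $x_i=B_i/\sum_{j=1}^kB_j$ for $i\le k$ and $0$ to everyone else. Case II: if $\sum_{j=1}^kB_j\le v_{k+1}$, allocate $x_i=B_i/v_{k+1}$ for $i\le k$, $x_{k+1}=1-\sum_{j=1}^kx_j$, and $0$ to everyone else. Payments are given by Myerson's formula $\pi_i(v)=v_ix_i(v)-\int_0^{v_i}x_i(u,v_{-i})\,du$. *)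

theory Defs
  imports "HOL-Analysis.Analysis"
begin

text \<open>Agents are indexed 0,...,n-1. Values v and budgets B are functions on nat;
  only the entries below n matter.\<close>

definition rank :: "(nat \<Rightarrow> real) \<Rightarrow> nat \<Rightarrow> nat \<Rightarrow> nat" where
  "rank v n i = card {j. j < n \<and> (v j > v i \<or> (v j = v i \<and> j < i))} + 1"

definition agent :: "(nat \<Rightarrow> real) \<Rightarrow> nat \<Rightarrow> nat \<Rightarrow> nat" where
  "agent v n k = (THE i. i < n \<and> rank v n i = k)"

definition sval :: "(nat \<Rightarrow> real) \<Rightarrow> nat \<Rightarrow> nat \<Rightarrow> real" where
  "sval v n k = (if 1 \<le> k \<and> k \<le> n then v (agent v n k) else 0)"

definition sbud :: "(nat \<Rightarrow> real) \<Rightarrow> (nat \<Rightarrow> real) \<Rightarrow> nat \<Rightarrow> nat \<Rightarrow> real" where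
  "sbud v B n k = (\<Sum>j\<in>{1..k}. B (agent v n j))"

definition kstar :: "(nat \<Rightarrow> real) \<Rightarrow> (nat \<Rightarrow> real) \<Rightarrow> nat \<Rightarrow> nat" where
  "kstar v B n = Max {k. k \<le> n \<and> (k = 0 \<or> sbud v B n k \<le> sval v n k)}"

definition alloc :: "(nat \<Rightarrow> real) \<Rightarrow> (nat \<Rightarrow> real) \<Rightarrow> nat \<Rightarrow> nat \<Rightarrow> real" where
  "alloc v B n i =
     (let k = kstar v B n; S = sbud v B n k; r = rank v n i in
      if S > sval v n (k + 1) then
        (if r \<le> k then B i / S else 0)
      else
        (if r \<le> k then B i / sval v n (k + 1)
         else if r = k + 1 then 1 - (\<Sum>j\<in>{1..k}. B (agent v n j) / sval v n (k + 1))
         else 0))"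

text \<open>Myerson payment: v_i x_i(v) - integral_0^{v_i} x_i(u, v_{-i}) du.\<close>
definition payment :: "(nat \<Rightarrow> real) \<Rightarrow> (nat \<Rightarrow> real) \<Rightarrow> nat \<Rightarrow> nat \<Rightarrow> real" where
  "payment v B n i = v i * alloc v B n i - integral {0..v i} (\<lambda>u. alloc (v(i := u)) B n i)"

end

theory Submission
  imports Defs
begin

text \<open>Let \<open>x(u)\<close> be the allocation of agent \<open>i\<close> when her value is \<open>u\<close> and all other values
  are fixed, so that her payment is \<open>v_i x(v_i)\<close> minus the integral of \<open>x \<ge> 0\<close> over \<open>[0, v_i]\<close>.
  A losing agent therefore pays at most \<open>0\<close>, and the marginal agent \<open>k+1\<close> of Case II pays at most
  \<open>v_{k+1} x_{k+1} = v_{k+1} - (B_1 + ... + B_k) < B_{k+1}\<close> by the maximality of \<open>k\<close>. A winner receives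
  \<open>B_i / c\<close> with \<open>c = max (B_1 + ... + B_k) v_{k+1}\<close>, and raising her value above \<open>c\<close> changes
  neither \<open>k\<close> nor her allocation; so \<open>x\<close> is constant on \<open>(c, \<infinity>)\<close> and the payment is at most
  \<open>c \<cdot> B_i / c = B_i\<close>. The integral exists because \<open>x\<close> is bounded and, between finitely many
  thresholds, is given by one of finitely many continuous formulas.\<close>

section \<open>The ranking of the agents\<close>

definition precedes :: "(nat \<Rightarrow> real) \<Rightarrow> nat \<Rightarrow> nat \<Rightarrow> bool" where
  "precedes v l j \<longleftrightarrow> v l > v j \<or> (v l = v j \<and> l < j)"

lemma rank_eq_card_precedes: "rank v n j = card {l. l < n \<and> precedes v l j} + 1"
  by (simp add: rank_def precedes_def)

lemma precedes_total: "l \<noteq> j \<Longrightarrow> precedes v l j \<or> precedes v j l"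
  by (auto simp: precedes_def)

lemma precedes_trans: "precedes v a b \<Longrightarrow> precedes v b c \<Longrightarrow> precedes v a c"
  by (auto simp: precedes_def)

lemma precedes_irrefl: "\<not> precedes v j j"
  by (auto simp: precedes_def)

lemma rank_less_of_precedes:
  assumes "precedes v j l" "j < n"
  shows "rank v n j < rank v n l"
proof -
  have "{x. x < n \<and> precedes v x j} \<subset> {x. x < n \<and> precedes v x l}"
    using precedes_trans[of v _ j l] precedes_irrefl[of v j] assms by auto
  then have "card {x. x < n \<and> precedes v x j} < card {x. x < n \<and> precedes v x l}"
    by (rule psubset_card_mono[rotated]) auto
  then show ?thesis by (simp add: rank_eq_card_precedes)
qed

lemma rank_ge_1: "1 \<le> rank v n j"
  by (simp add: rank_def)

lemma rank_le: assumes "j < n" shows "rank v n j \<le> n"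
proof -
  have "{x. x < n \<and> precedes v x j} \<subseteq> {..<n} - {j}"
    using precedes_irrefl by auto
  then have "card {x. x < n \<and> precedes v x j} \<le> card ({..<n} - {j})"
    by (intro card_mono) auto
  then show ?thesis using assms by (simp add: rank_eq_card_precedes)
qed

lemma inj_on_rank: "inj_on (rank v n) {..<n}"
proof (rule inj_onI)
  fix a b assume "a \<in> {..<n}" "b \<in> {..<n}" "rank v n a = rank v n b"
  then show "a = b"
    using precedes_total[of a b v] rank_less_of_precedes[of v a b n]
      rank_less_of_precedes[of v b a n] by force
qed

lemma rank_image: "rank v n ` {..<n} = {1..n}"
proof -
  have "rank v n ` {..<n} \<subseteq> {1..n}" using rank_ge_1 rank_le by auto
  moreover have "card (rank v n ` {..<n}) = n" using card_image[OF inj_on_rank] by simp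
  ultimately show ?thesis by (intro card_subset_eq) auto
qed

lemma agent_less_and_rank:
  assumes "1 \<le> m" "m \<le> n"
  shows "agent v n m < n \<and> rank v n (agent v n m) = m"
proof -
  from assms rank_image[of v n] obtain j where "j < n" "rank v n j = m"
    by (metis atLeastAtMost_iff imageE lessThan_iff)
  then have "\<exists>!j. j < n \<and> rank v n j = m"
    using inj_on_rank[of v n] by (auto dest: inj_onD)
  then show ?thesis unfolding agent_def by (rule theI')
qed

lemma agent_rank: assumes "j < n" shows "agent v n (rank v n j) = j"
  unfolding agent_def
  by (rule the_equality) (use assms inj_on_rank[of v n] in \<open>auto dest: inj_onD\<close>)

lemma value_le_of_rank_le:
  assumes "j < n" "l < n" "rank v n j \<le> rank v n l"
  shows "v l \<le> v j"
proof (cases "j = l")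
  case False
  then have "precedes v j l"
    using precedes_total[of j l v] rank_less_of_precedes[of v l j n] assms by force
  then show ?thesis by (auto simp: precedes_def)
qed simp

lemma sval_le_value:
  assumes "j < n" "1 \<le> m" "m \<le> n" "rank v n j \<le> m"
  shows "sval v n m \<le> v j"
  using agent_less_and_rank[OF assms(2,3), of v] value_le_of_rank_le[of j n "agent v n m" v] assms
  by (simp add: sval_def)

lemma value_le_sval:
  assumes "j < n" "1 \<le> m" "m \<le> rank v n j"
  shows "v j \<le> sval v n m"
proof -
  have "m \<le> n" using rank_le[OF assms(1), of v] assms by simp
  then show ?thesis
    using agent_less_and_rank[OF assms(2) \<open>m \<le> n\<close>, of v]
      value_le_of_rank_le[of "agent v n m" n j v] assms
    by (simp add: sval_def)
qed

definition top_agents :: "(nat \<Rightarrow> real) \<Rightarrow> nat \<Rightarrow> nat \<Rightarrow> nat set" where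
  "top_agents v n m = {j. j < n \<and> rank v n j \<le> m}"

lemma sbud_eq_sum_top_agents:
  assumes "m \<le> n"
  shows "sbud v B n m = sum B (top_agents v n m)"
proof -
  have "bij_betw (agent v n) {1..m} (top_agents v n m)"
    by (rule bij_betw_byWitness[where f'="rank v n"])
      (use assms agent_less_and_rank[of _ n v] agent_rank[of _ n v] rank_ge_1[of v n]
        in \<open>auto simp: top_agents_def\<close>)
  then show ?thesis unfolding sbud_def by (rule sum.reindex_bij_betw)
qed

lemma sbud_nonneg:
  assumes "\<forall>j<n. B j > 0" "m \<le> n"
  shows "0 \<le> sbud v B n m"
  unfolding sbud_eq_sum_top_agents[OF assms(2)]
  by (rule sum_nonneg) (use assms in \<open>auto simp: top_agents_def less_imp_le\<close>)

lemma budget_le_sbud: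
  assumes "\<forall>j<n. B j > 0" "m \<le> n" "i < n" "rank v n i \<le> m"
  shows "B i \<le> sbud v B n m"
  unfolding sbud_eq_sum_top_agents[OF assms(2)]
  by (rule member_le_sum) (use assms in \<open>auto simp: top_agents_def less_imp_le\<close>)

lemma
  shows kstar_le: "kstar v B n \<le> n"
    and kstar_admissible: "kstar v B n = 0 \<or> sbud v B n (kstar v B n) \<le> sval v n (kstar v B n)"
    and le_kstar: "m \<le> n \<Longrightarrow> sbud v B n m \<le> sval v n m \<Longrightarrow> m \<le> kstar v B n"
proof -
  let ?M = "{k. k \<le> n \<and> (k = 0 \<or> sbud v B n k \<le> sval v n k)}"
  have fin: "finite ?M" by (rule finite_subset[of _ "{..n}"]) auto
  have "kstar v B n \<in> ?M" unfolding kstar_def using fin by (rule Max_in) auto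
  then show "kstar v B n \<le> n"
    "kstar v B n = 0 \<or> sbud v B n (kstar v B n) \<le> sval v n (kstar v B n)"
    by auto
  show "m \<le> n \<Longrightarrow> sbud v B n m \<le> sval v n m \<Longrightarrow> m \<le> kstar v B n"
    unfolding kstar_def using fin by (intro Max_ge) auto
qed

lemma alloc_eq:
  "alloc v B n i =
     (let k = kstar v B n; S = sbud v B n k; w = sval v n (k + 1); r = rank v n i in
      if S > w then (if r \<le> k then B i / S else 0)
      else if r \<le> k then B i / w else if r = k + 1 then 1 - S / w else 0)"
  by (simp add: alloc_def Let_def sbud_def sum_divide_distrib)

lemma
  assumes "\<forall>j<n. B j > 0" "i < n"
  shows alloc_nonneg: "0 \<le> alloc v B n i"
    and alloc_le_1: "alloc v B n i \<le> 1"
proof -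
  have "0 \<le> sbud v B n (kstar v B n)"
    using sbud_nonneg[OF assms(1) kstar_le] .
  moreover have "rank v n i \<le> kstar v B n \<Longrightarrow> B i \<le> sbud v B n (kstar v B n)"
    using budget_le_sbud[OF assms(1) kstar_le assms(2)] .
  ultimately show "0 \<le> alloc v B n i" "alloc v B n i \<le> 1"
    using assms by (auto simp: alloc_eq Let_def field_simps divide_le_eq_1)
qed

section \<open>Raising the value of a top agent\<close>

context
  fixes v :: "nat \<Rightarrow> real" and n i m :: nat and u :: real
  assumes top_i: "rank v n i \<le> m" and u_above: "sval v n (m + 1) < u"
begin

lemma rank_raise_outside:
  assumes j: "j < n" "m < rank v n j"
  shows "rank (v(i := u)) n j = rank v n j"
proof -
  have ji: "j \<noteq> i" using top_i j by auto
  have "precedes (v(i := u)) i j"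
    using value_le_sval[of j n "m + 1" v] u_above ji j by (simp add: precedes_def)
  moreover have "precedes v i j"
    using rank_less_of_precedes[of v j i n] precedes_total[of i j v] ji j top_i by force
  ultimately have "precedes (v(i := u)) l j = precedes v l j" for l
    using ji by (cases "l = i") (auto simp: precedes_def)
  then show ?thesis by (simp add: rank_eq_card_precedes)
qed

lemma rank_raise_inside:
  assumes j: "j < n" "rank v n j \<le> m"
  shows "rank (v(i := u)) n j \<le> m"
proof (rule ccontr)
  assume "\<not> rank (v(i := u)) n j \<le> m"
  then have gt: "m < rank (v(i := u)) n j" by simp
  define l where "l = agent v n (rank (v(i := u)) n j)"
  have l: "l < n" "rank v n l = rank (v(i := u)) n j"
    using agent_less_and_rank[of "rank (v(i := u)) n j" n v] gt rank_le[OF j(1)]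
    by (auto simp: l_def)
  then have "rank (v(i := u)) n l = rank (v(i := u)) n j"
    using rank_raise_outside gt by simp
  then have "l = j" using inj_on_rank[of "v(i := u)" n] l(1) j(1) by (auto dest: inj_onD)
  then show False using l gt j by simp
qed

lemma top_agents_raise:
  assumes "m \<le> m'"
  shows "top_agents (v(i := u)) n m' = top_agents v n m'"
proof -
  have "rank (v(i := u)) n j \<le> m' \<longleftrightarrow> rank v n j \<le> m'" if "j < n" for j
    using rank_raise_inside[OF that] rank_raise_outside[OF that] assms
    by (cases "rank v n j \<le> m") auto
  then show ?thesis by (auto simp: top_agents_def)
qed

lemma sbud_raise: "m \<le> m' \<Longrightarrow> m' \<le> n \<Longrightarrow> sbud (v(i := u)) B n m' = sbud v B n m'"
  by (simp add: sbud_eq_sum_top_agents top_agents_raise)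

lemma sval_raise:
  assumes "m < m'"
  shows "sval (v(i := u)) n m' = sval v n m'"
proof (cases "m' \<le> n")
  case True
  define a where "a = agent v n m'"
  have a: "a < n" "rank v n a = m'"
    using agent_less_and_rank[of m' n v] True assms by (auto simp: a_def)
  then have "agent (v(i := u)) n m' = a"
    using rank_raise_outside[of a] agent_rank[of a n "v(i := u)"] assms by simp
  moreover have "a \<noteq> i" using a top_i assms by auto
  ultimately show ?thesis by (simp add: sval_def a_def)
qed (simp add: sval_def)

end

text \<open>The admissibility of \<open>k\<close> survives because the agent of rank \<open>k\<close> is either \<open>i\<close>, whose new
  value exceeds \<open>B_1 + ... + B_k\<close>, or some other top agent whose value is at least the old \<open>v_k\<close>.\<close>
lemma kstar_raise:
  assumes top_i: "rank v n i \<le> kstar v B n"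
    and u_above: "sval v n (kstar v B n + 1) < u" "sbud v B n (kstar v B n) < u"
  shows "kstar (v(i := u)) B n = kstar v B n"
proof -
  define k where "k = kstar v B n"
  define v' where "v' = v(i := u)"
  have k: "k \<le> n" "1 \<le> k" using kstar_le top_i rank_ge_1[of v n i] by (auto simp: k_def)
  define a where "a = agent v' n k"
  have a: "a < n" "rank v' n a = k" using agent_less_and_rank[of k n v'] k by (auto simp: a_def)
  have "rank v n a \<le> k"
    using rank_raise_outside[OF top_i u_above(1), of a] a by (force simp: k_def v'_def)
  then have "sbud v B n k \<le> v' a"
    using sval_le_value[of a n k v] kstar_admissible[of v B n] a k u_above(2)
    by (cases "a = i") (auto simp: v'_def k_def)
  then have "sbud v' B n k \<le> sval v' n k"
    using sbud_raise[OF top_i u_above(1), of k B] k by (simp add: sval_def a_def k_def v'_def)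
  then have "k \<le> kstar v' B n" using le_kstar k by blast
  moreover have "m \<le> k" if "m \<le> n" "sbud v' B n m \<le> sval v' n m" for m
  proof (rule ccontr)
    assume "\<not> m \<le> k"
    then have "sbud v B n m \<le> sval v n m"
      using that sbud_raise[OF top_i u_above(1), of m B] sval_raise[OF top_i u_above(1), of m]
      by (simp add: k_def v'_def)
    then show False using le_kstar[of m n v B] that(1) \<open>\<not> m \<le> k\<close> k_def by simp
  qed
  ultimately show ?thesis
    using kstar_le[of v' B n] kstar_admissible[of v' B n] k_def v'_def by (metis le_antisym le_0_eq)
qed

lemma alloc_raise:
  assumes i: "i < n" and top_i: "rank v n i \<le> kstar v B n"
    and u_above: "sval v n (kstar v B n + 1) < u" "sbud v B n (kstar v B n) < u"
  shows "alloc (v(i := u)) B n i = alloc v B n i"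
  using kstar_raise[OF top_i u_above] sbud_raise[OF top_i u_above(1) order.refl kstar_le]
    sval_raise[OF top_i u_above(1), of "kstar v B n + 1"]
    rank_raise_inside[OF top_i u_above(1) i top_i] top_i
  by (simp add: alloc_eq Let_def)

lemma winner_alloc_eventually_const:
  assumes B: "\<forall>j<n. B j > 0" and i: "i < n" and top_i: "rank v n i \<le> kstar v B n"
  obtains c where "0 < c" "c * alloc v B n i = B i"
    "\<And>u. c < u \<Longrightarrow> alloc (v(i := u)) B n i = alloc v B n i"
proof
  let ?S = "sbud v B n (kstar v B n)" and ?w = "sval v n (kstar v B n + 1)"
  have "B i \<le> ?S" by (rule budget_le_sbud[OF B kstar_le i top_i])
  then show "0 < max ?S ?w" using B i by force
  then show "max ?S ?w * alloc v B n i = B i"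
    using top_i by (auto simp: alloc_eq Let_def max_def)
  show "alloc (v(i := u)) B n i = alloc v B n i" if "max ?S ?w < u" for u
    using alloc_raise[OF i top_i] that by simp
qed

lemma non_winner_value_mult_alloc_le_budget:
  assumes B: "\<forall>j<n. B j > 0" and i: "i < n" and not_top: "\<not> rank v n i \<le> kstar v B n"
  shows "v i * alloc v B n i \<le> B i"
proof -
  let ?k = "kstar v B n"
  let ?S = "sbud v B n ?k" and ?w = "sval v n (?k + 1)"
  consider "\<not> ?S > ?w" "rank v n i = ?k + 1" | "alloc v B n i = 0"
    unfolding alloc_eq Let_def using not_top
    by (cases "?S > ?w"; cases "rank v n i = ?k + 1") auto
  then show ?thesis
  proof cases
    case 1
    have k1: "?k + 1 \<le> n" using 1 rank_le[OF i, of v] by simp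
    have w: "?w = v i" using k1 agent_rank[OF i, of v] 1 by (simp add: sval_def)
    have "sbud v B n (?k + 1) = ?S + B i"
      using agent_rank[OF i, of v] 1 by (simp add: sbud_def)
    then have "v i < ?S + B i" using le_kstar[of "?k + 1" n v B] k1 w by force
    moreover have "v i * alloc v B n i = (if v i = 0 then 0 else v i - ?S)"
      using 1 w by (simp add: alloc_eq Let_def field_simps)
    ultimately show ?thesis using B i by auto
  qed (use B i in \<open>simp add: less_imp_le\<close>)
qed

section \<open>Measurability of the allocation as a function of the own value\<close>

definition cuts :: "real set \<Rightarrow> real \<Rightarrow> real set \<times> real set" where
  "cuts X u = ({x \<in> X. x < u}, {x \<in> X. x \<le> u})"

lemma cuts_eqD:
  assumes "cuts X u = cuts X u'" "x \<in> X"
  shows "(x < u \<longleftrightarrow> x < u') \<and> (x \<le> u \<longleftrightarrow> x \<le> u')"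
proof -
  have "{x \<in> X. x < u} = {x \<in> X. x < u'}" "{x \<in> X. x \<le> u} = {x \<in> X. x \<le> u'}"
    using assms(1) by (simp_all add: cuts_def)
  then show ?thesis using assms(2) by blast
qed

lemma cuts_eq_subset: "cuts X u = cuts X u' \<Longrightarrow> Y \<subseteq> X \<Longrightarrow> cuts Y u = cuts Y u'"
  unfolding cuts_def using cuts_eqD[of X u u'] by auto

lemma finite_range_cuts: "finite X \<Longrightarrow> finite (range (cuts X))"
  by (rule finite_subset[of _ "Pow X \<times> Pow X"]) (auto simp: cuts_def)

lemma cuts_some_eq: "cuts X (SOME u'. cuts X u' = cuts X u) = cuts X u"
  by (rule someI) (rule refl)

lemma measurable_cuts_eq:
  assumes "finite X"
  shows "Measurable.pred borel (\<lambda>u. cuts X u = p)"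
proof -
  have "cuts X u = p \<longleftrightarrow>
      (\<forall>x\<in>X. (x < u \<longleftrightarrow> x \<in> fst p) \<and> (x \<le> u \<longleftrightarrow> x \<in> snd p)) \<and> fst p \<subseteq> X \<and> snd p \<subseteq> X" for u
    by (cases p) (auto simp: cuts_def)
  moreover have "Measurable.pred borel (\<lambda>u. \<forall>x\<in>X. (x < u \<longleftrightarrow> x \<in> fst p) \<and> (x \<le> u \<longleftrightarrow> x \<in> snd p))"
    by (rule pred_intros_finite(3)[OF assms]) measurable
  ultimately show ?thesis by simp
qed

lemma rank_fun_upd_cuts_eq:
  assumes "cuts (v ` {..<n}) u = cuts (v ` {..<n}) u'" "j < n"
  shows "rank (v(i := u)) n j = rank (v(i := u')) n j"
proof -
  have same_side: "(v b < u \<longleftrightarrow> v b < u')" "(v b \<le> u \<longleftrightarrow> v b \<le> u')" if "b < n" for b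
    using cuts_eqD[OF assms(1)] that by blast+
  have "l < n \<and> precedes (v(i := u)) l j \<longleftrightarrow> l < n \<and> precedes (v(i := u')) l j" for l
    using same_side[of l] same_side[of j] assms(2)
    by (cases "l = i"; cases "j = i") (auto simp: precedes_def)
  then show ?thesis by (simp add: rank_eq_card_precedes)
qed

lemma agent_fun_upd_cuts_eq:
  assumes "cuts (v ` {..<n}) u = cuts (v ` {..<n}) u'"
  shows "agent (v(i := u)) n m = agent (v(i := u')) n m"
  unfolding agent_def
proof (intro arg_cong[where f = The] ext)
  fix j
  show "j < n \<and> rank (v(i := u)) n j = m \<longleftrightarrow> j < n \<and> rank (v(i := u')) n j = m"
    using rank_fun_upd_cuts_eq[OF assms, of j i] by auto
qed

lemma sbud_fun_upd_cuts_eq: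
  assumes "cuts (v ` {..<n}) u = cuts (v ` {..<n}) u'"
  shows "sbud (v(i := u)) B n m = sbud (v(i := u')) B n m"
  unfolding sbud_def by (rule sum.cong) (simp_all add: agent_fun_upd_cuts_eq[OF assms])

text \<open>Through the admissibility test defining \<open>kstar\<close>, the own value \<open>u\<close> is also compared with
  these sums.\<close>
definition budget_sums :: "(nat \<Rightarrow> real) \<Rightarrow> (nat \<Rightarrow> real) \<Rightarrow> nat \<Rightarrow> nat \<Rightarrow> real set" where
  "budget_sums v B n i = {sbud (v(i := u)) B n m | u m. m \<le> n}"

lemma finite_budget_sums: "finite (budget_sums v B n i)"
proof -
  let ?X = "v ` {..<n}"
  let ?g = "\<lambda>(p, m). sbud (v(i := SOME u. cuts ?X u = p)) B n m"
  have "budget_sums v B n i \<subseteq> ?g ` (range (cuts ?X) \<times> {..n})"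
  proof
    fix t assume "t \<in> budget_sums v B n i"
    then obtain u m where t: "t = sbud (v(i := u)) B n m" "m \<le> n"
      by (auto simp: budget_sums_def)
    then have "t = ?g (cuts ?X u, m)"
      using sbud_fun_upd_cuts_eq[OF cuts_some_eq[symmetric, of ?X u]] by simp
    then show "t \<in> ?g ` (range (cuts ?X) \<times> {..n})" using t(2) by blast
  qed
  moreover have "finite (?g ` (range (cuts ?X) \<times> {..n}))"
    by (intro finite_imageI finite_cartesian_product finite_range_cuts) simp_all
  ultimately show ?thesis by (rule finite_subset)
qed

definition alloc_params :: "(nat \<Rightarrow> real) \<Rightarrow> (nat \<Rightarrow> real) \<Rightarrow> nat \<Rightarrow> nat \<Rightarrow> real \<Rightarrow> nat \<times> real \<times> nat \<times> nat" where
  "alloc_params v B n i u = (let v' = v(i := u); k = kstar v' B n in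
     (k, sbud v' B n k, rank v' n i, agent v' n (k + 1)))"

text \<open>The allocation of \<open>i\<close> at own value \<open>u\<close>, as a function of \<open>u\<close> once the discrete parameters are
  fixed; \<open>u\<close> enters directly only when \<open>i\<close> is herself the agent of rank \<open>k + 1\<close>.\<close>
definition alloc_formula ::
    "(nat \<Rightarrow> real) \<Rightarrow> (nat \<Rightarrow> real) \<Rightarrow> nat \<Rightarrow> nat \<Rightarrow> nat \<times> real \<times> nat \<times> nat \<Rightarrow> real \<Rightarrow> real" where
  "alloc_formula v B n i q u = (case q of (k, S, r, a) \<Rightarrow>
     (let w = (if k + 1 \<le> n then (if a = i then u else v a) else 0) in
      if S > w then (if r \<le> k then B i / S else 0)
      else if r \<le> k then B i / w else if r = k + 1 then 1 - S / w else 0))"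

lemma alloc_fun_upd_eq_formula:
  "alloc (v(i := u)) B n i = alloc_formula v B n i (alloc_params v B n i u) u"
  unfolding alloc_eq alloc_formula_def alloc_params_def Let_def sval_def by simp

lemma borel_measurable_alloc_formula: "alloc_formula v B n i q \<in> borel_measurable borel"
proof -
  obtain k S r a where "q = (k, S, r, a)" by (cases q) auto
  then show ?thesis unfolding alloc_formula_def prod.case Let_def by measurable
qed

lemma alloc_params_cuts_eq:
  assumes "cuts (v ` {..<n} \<union> budget_sums v B n i) u = cuts (v ` {..<n} \<union> budget_sums v B n i) u'"
    and i: "i < n"
  shows "alloc_params v B n i u = alloc_params v B n i u'"
proof -
  have vals: "cuts (v ` {..<n}) u = cuts (v ` {..<n}) u'"
    using cuts_eq_subset[OF assms(1)] by blast
  have "sbud (v(i := u)) B n m \<le> sval (v(i := u)) n m \<longleftrightarrow>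
      sbud (v(i := u')) B n m \<le> sval (v(i := u')) n m" if "m \<le> n" for m
  proof -
    have "sbud (v(i := u)) B n m \<in> budget_sums v B n i"
      unfolding budget_sums_def using that by blast
    then have "sbud (v(i := u)) B n m \<le> u \<longleftrightarrow> sbud (v(i := u)) B n m \<le> u'"
      using cuts_eqD[OF assms(1)] by blast
    then show ?thesis
      unfolding sval_def agent_fun_upd_cuts_eq[OF vals, of i m]
      by (simp add: sbud_fun_upd_cuts_eq[OF vals, of i B m])
  qed
  then have "kstar (v(i := u)) B n = kstar (v(i := u')) B n"
    unfolding kstar_def by (metis (no_types, lifting))
  then show ?thesis
    unfolding alloc_params_def Let_def
    using sbud_fun_upd_cuts_eq[OF vals] agent_fun_upd_cuts_eq[OF vals]
      rank_fun_upd_cuts_eq[OF vals i] by simp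
qed

lemma borel_measurable_alloc_fun_upd:
  assumes i: "i < n"
  shows "(\<lambda>u. alloc (v(i := u)) B n i) \<in> borel_measurable borel"
proof -
  define X where "X = v ` {..<n} \<union> budget_sums v B n i"
  have X: "finite X" by (simp add: X_def finite_budget_sums)
  let ?param = "\<lambda>p. alloc_params v B n i (SOME u. cuts X u = p)"
  have "alloc (v(i := u)) B n i =
      (\<Sum>p\<in>range (cuts X). if cuts X u = p then alloc_formula v B n i (?param p) u else 0)" for u
  proof -
    have "?param (cuts X u) = alloc_params v B n i u"
      by (rule alloc_params_cuts_eq[OF _ i]) (use cuts_some_eq[of X u] in \<open>simp add: X_def\<close>)
    then show ?thesis
      using finite_range_cuts[OF X] by (simp add: alloc_fun_upd_eq_formula)
  qed
  moreover have "(\<lambda>u. \<Sum>p\<in>range (cuts X). if cuts X u = p then alloc_formula v B n i (?param p) u else 0)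
      \<in> borel_measurable borel"
    by (intro borel_measurable_sum measurable_If borel_measurable_alloc_formula borel_measurable_const)
      (use measurable_cuts_eq[OF X] in \<open>auto simp: Measurable.pred_def\<close>)
  ultimately show ?thesis by simp
qed

lemma alloc_fun_upd_integrable:
  assumes "\<forall>j<n. B j > 0" "i < n"
  shows "(\<lambda>u. alloc (v(i := u)) B n i) integrable_on {a..b}"
proof (rule measurable_bounded_by_integrable_imp_integrable_real[where g = "\<lambda>_. 1"])
  show "(\<lambda>u. alloc (v(i := u)) B n i) \<in> borel_measurable (lebesgue_on {a..b})"
    using borel_measurable_alloc_fun_upd[OF assms(2), of v B]
    by (simp add: measurable_completion measurable_restrict_space1)
  show "\<bar>alloc (v(i := u)) B n i\<bar> \<le> 1" for u
    using alloc_nonneg[OF assms] alloc_le_1[OF assms] by simp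
qed auto

section \<open>The payment bound\<close>

lemma myerson_payment_le_of_eventually_const:
  fixes f :: "real \<Rightarrow> real"
  assumes f: "f integrable_on {0..t}" "\<And>u. 0 \<le> f u"
    and const: "0 \<le> c" "0 \<le> x" "\<And>u. c < u \<Longrightarrow> f u = x"
  shows "t * x - integral {0..t} f \<le> c * x"
proof (cases "t \<le> c")
  case True
  then show ?thesis using integral_nonneg[OF f] mult_right_mono[OF True const(2)] by linarith
next
  case False
  have "integral {c..t} f = integral {c..t} (\<lambda>_. x)"
    by (rule integral_spike[of "{c}"]) (auto simp: const(3))
  then have "integral {c..t} f = (t - c) * x" using False by simp
  moreover have "integral {0..c} f + integral {c..t} f = integral {0..t} f"
    using Henstock_Kurzweil_Integration.integral_combine[OF const(1) _ f(1)] False by simp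
  moreover have "0 \<le> integral {0..c} f"
    using integral_nonneg[OF integrable_subinterval_real[OF f(1)] f(2)] False by simp
  moreover have "(t - c) * x = t * x - c * x" by (simp add: algebra_simps)
  ultimately show ?thesis by linarith
qed

theorem mainTheorem7:
  fixes v B :: "nat \<Rightarrow> real" and n i :: nat
  assumes "\<forall>j<n. v j > 0" and "\<forall>j<n. B j > 0" and "i < n"
  shows "payment v B n i \<le> B i"
proof -
  note B = assms(2) and i = assms(3)
  let ?x = "\<lambda>u. alloc (v(i := u)) B n i"
  have x: "?x integrable_on {0..v i}" "\<And>u. 0 \<le> ?x u"
    using alloc_fun_upd_integrable[OF B i] alloc_nonneg[OF B i] by blast+
  show ?thesis
  proof (cases "rank v n i \<le> kstar v B n")
    case True
    then obtain c where c: "0 < c" "c * alloc v B n i = B i"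
      "\<And>u. c < u \<Longrightarrow> ?x u = alloc v B n i"
      using winner_alloc_eventually_const[OF B i] by blast
    have "payment v B n i \<le> c * alloc v B n i"
      unfolding payment_def
      by (rule myerson_payment_le_of_eventually_const[OF x]) (use c alloc_nonneg[OF B i] in auto)
    with c show ?thesis by simp
  next
    case False
    then show ?thesis
      using non_winner_value_mult_alloc_le_budget[OF B i] integral_nonneg[OF x]
      unfolding payment_def by force
  qed
qed

end
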